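(* Under the hypotheses of either of the following two results, the point $(\theta^*,\theta^* )$ is in fact uniformly globally exponentially stable: (i) the system $\dot\theta=-\beta(\theta-\vartheta)\mathcal{N}_t$, $\dot\vartheta=-\gamma\phi(t)\phi^T(t)(\theta-\theta^* )$; (ii) the system $\dot\theta=-\beta(\theta-\vartheta)$, $\dot\vartheta=-\frac{\gamma}{\mathcal{N}_t}\phi(t)\phi^T(t)(\theta-\theta^* )$; where in both cases $\phi:\mathbb{R}_{\ge0}\to\mathbb{R}^n$ is piecewise continuous with $|\phi(t)|\le M$ and $\int_t^{t+T}\phi\phi^T\,ds\ge\delta I_n$ for all $t\ge0$ (some $M,T,\delta>0$), $\mathcal{N}_t=1+\mu\phi^T(t)\phi(t)$, and $\beta,\gamma,\mu>0$ with $\beta\ge2\gamma/\mu$. That is, there exist $c>0$, $\alpha>0$ such that every solution with initial condition $(x_\circ,t_\circ)$ satisfies $|x(t)-(\theta^*,\theta^* )|\le c\,|x_\circ-(\theta^*,\theta^* )|\,e^{-\alpha(t-t_\circ)}$ for all $t\ge t_\circ$.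
   Context: $x=(\theta,\vartheta)\in\mathbb{R}^{2n}$, $\theta^*\in\mathbb{R}^n$ fixed, $|\cdot|$ the Euclidean norm. *)

theory Defs
  imports "HOL-Analysis.Analysis"
begin

definition outer :: "real ^ 'n \<Rightarrow> real ^ 'n \<Rightarrow> real ^ 'n ^ 'n" where
  "outer u v = (\<chi> i j. u $ i * v $ j)"

definition mat_ge :: "real ^ 'n ^ 'n \<Rightarrow> real ^ 'n ^ 'n \<Rightarrow> bool" where
  "mat_ge A B \<longleftrightarrow> (\<forall>v. 0 \<le> v \<bullet> ((A - B) *v v))"

definition piecewise_continuous_nonneg :: "(real \<Rightarrow> 'a::real_normed_vector) \<Rightarrow> bool" where
  "piecewise_continuous_nonneg f \<longleftrightarrow>
    (\<forall>a b. 0 \<le> a \<longrightarrow> (\<exists>S. finite S \<and> continuous_on ({a..b} - S) f \<and>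
       (\<forall>s\<in>S. (\<exists>l. (f \<longlongrightarrow> l) (at s within {a..<s})) \<and>
                (\<exists>r. (f \<longlongrightarrow> r) (at s within {s<..b})))))"

text \<open>Solution (Caratheodory sense, integral form) of x' = F t x on [t0,\<infinity>)
  with x(t0) = x0.\<close>
definition is_solution ::
  "(real \<Rightarrow> 'a \<Rightarrow> 'a::euclidean_space) \<Rightarrow> real \<Rightarrow> 'a \<Rightarrow> (real \<Rightarrow> 'a) \<Rightarrow> bool" where
  "is_solution F t0 x0 x \<longleftrightarrow> continuous_on {t0..} x \<and> x t0 = x0 \<and>
     (\<forall>t\<ge>t0. ((\<lambda>s. F s (x s)) has_integral (x t - x0)) {t0..t})"

definition UGES :: "(real \<Rightarrow> 'a \<Rightarrow> 'a::euclidean_space) \<Rightarrow> 'a \<Rightarrow> bool" where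
  "UGES F xs \<longleftrightarrow> (\<exists>c>0. \<exists>\<alpha>>0. \<forall>t0 x0 x. 0 \<le> t0 \<longrightarrow> is_solution F t0 x0 x \<longrightarrow>
      (\<forall>t\<ge>t0. norm (x t - xs) \<le> c * norm (x0 - xs) * exp (- \<alpha> * (t - t0))))"

definition Nt :: "real \<Rightarrow> (real \<Rightarrow> real ^ 'n) \<Rightarrow> real \<Rightarrow> real" where
  "Nt \<mu> \<phi> t = 1 + \<mu> * (\<phi> t \<bullet> \<phi> t)"

definition sys1 ::
  "real \<Rightarrow> real \<Rightarrow> real \<Rightarrow> (real \<Rightarrow> real ^ 'n) \<Rightarrow> real ^ 'n \<Rightarrow>
   real \<Rightarrow> (real ^ 'n) \<times> (real ^ 'n) \<Rightarrow> (real ^ 'n) \<times> (real ^ 'n)" where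
  "sys1 \<beta> \<gamma> \<mu> \<phi> \<theta>s t x =
     (- (\<beta> * Nt \<mu> \<phi> t) *\<^sub>R (fst x - snd x),
      - \<gamma> *\<^sub>R (outer (\<phi> t) (\<phi> t) *v (fst x - \<theta>s)))"

definition sys2 ::
  "real \<Rightarrow> real \<Rightarrow> real \<Rightarrow> (real \<Rightarrow> real ^ 'n) \<Rightarrow> real ^ 'n \<Rightarrow>
   real \<Rightarrow> (real ^ 'n) \<times> (real ^ 'n) \<Rightarrow> (real ^ 'n) \<times> (real ^ 'n)" where
  "sys2 \<beta> \<gamma> \<mu> \<phi> \<theta>s t x =
     (- \<beta> *\<^sub>R (fst x - snd x),
      - (\<gamma> / Nt \<mu> \<phi> t) *\<^sub>R (outer (\<phi> t) (\<phi> t) *v (fst x - \<theta>s)))"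

end

theory Submission
  imports Defs
begin

text \<open>
  Write \<open>z = \<vartheta> - \<theta>\<^sup>*\<close> and \<open>e = \<theta> - \<vartheta>\<close>, so that \<open>\<theta> - \<theta>\<^sup>* = z + e\<close>, and let
  \<open>p = \<phi>\<^sup>T(\<theta> - \<theta>\<^sup>*)\<close> be the prediction error. For both systems the function
  \<open>V = |z|\<^sup>2 + |e|\<^sup>2\<close> satisfies \<open>V' \<le> -a p\<^sup>2 - b |e|\<^sup>2\<close>; the gain condition \<open>\<beta> \<ge> 2\<gamma>/\<mu>\<close> is
  exactly what lets the damping of \<open>e\<close> absorb the cross term \<open>p \<phi>\<^sup>Te\<close>. Moreover \<open>|z'| \<le> c\<^sub>z |p|\<close>
  and \<open>|e|\<^sup>2\<close> cannot decay faster than exponentially up to a \<open>p\<^sup>2\<close> term. On a window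
  \<open>[t, t+T]\<close>, persistent excitation bounds \<open>|z(t)|\<^sup>2\<close> by \<open>\<integral>p\<^sup>2\<close>, \<open>\<integral>|e|\<^sup>2\<close> and the drift
  of \<open>z\<close>, and \<open>|e(t)|\<^sup>2\<close> is bounded by the same integrals, so
  \<open>V(t) \<le> K (\<integral>p\<^sup>2 + \<integral>|e|\<^sup>2) \<le> K' (V(t) - V(t+T))\<close>. Thus \<open>V\<close> contracts by a fixed factor
  on every window of length \<open>T\<close>, uniformly in the initial time, which is exponential decay.
\<close>

lemma integrable_on_bounded_continuous_off_finite:
  fixes f :: "real \<Rightarrow> real"
  assumes S: "finite S" and cont: "continuous_on ({a..b} - S) f"
    and bound: "\<And>s. s \<in> {a..b} \<Longrightarrow> \<bar>f s\<bar> \<le> B"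
  shows "f integrable_on {a..b}"
proof -
  have L: "{a..b} - S \<in> sets lebesgue"
    using S by (simp add: finite_imp_closed sets.Diff)
  have meas: "f \<in> borel_measurable (lebesgue_on ({a..b} - S))"
    by (rule continuous_imp_measurable_on_sets_lebesgue[OF cont L])
  have neg: "negligible (({a..b} - S - {a..b}) \<union> ({a..b} - ({a..b} - S)))"
    using S by (auto intro: negligible_subset[OF negligible_finite[OF S]])
  have "(\<lambda>_. B) integrable_on {a..b} - S"
    using integrable_spike_set_eq[OF neg] integrable_const_ivl by blast
  then have "f absolutely_integrable_on ({a..b} - S)"
    by (rule measurable_bounded_by_integrable_imp_absolutely_integrable[OF meas L])
       (use bound in auto)
  then have "f integrable_on {a..b} - S" by (simp add: absolutely_integrable_on_def)
  then show ?thesis using integrable_spike_set_eq[OF neg] by blast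
qed

lemma diff_le_integral_of_derivative_le:
  fixes f f' h :: "real \<Rightarrow> real"
  assumes S: "finite S" and ab: "a \<le> b" and cont: "continuous_on {a..b} f"
    and deriv: "\<And>s. s \<in> {a<..<b} - S \<Longrightarrow> (f has_real_derivative f' s) (at s)"
    and le: "\<And>s. s \<in> {a<..<b} - S \<Longrightarrow> f' s \<le> h s"
    and h: "h integrable_on {a..b}"
  shows "f b - f a \<le> integral {a..b} h"
proof -
  define g where "g s = (if s \<in> {a<..<b} - S then f' s else h s)" for s
  have "(g has_integral (f b - f a)) {a..b}"
    by (rule fundamental_theorem_of_calculus_interior_strong[OF S ab _ cont])
       (use deriv in \<open>simp add: g_def has_real_derivative_iff_has_vector_derivative[symmetric]\<close>)
  then show ?thesis
    using h by (rule has_integral_le[OF _ integrable_integral]) (use le in \<open>auto simp: g_def\<close>)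
qed

lemma has_real_derivative_inner_self:
  fixes u :: "real \<Rightarrow> 'a::real_inner"
  assumes "(u has_vector_derivative u') (at s)"
  shows "((\<lambda>s. u s \<bullet> u s) has_real_derivative 2 * (u s \<bullet> u')) (at s)"
  using bounded_bilinear.has_vector_derivative[OF bounded_bilinear_inner assms assms]
  by (simp add: has_real_derivative_iff_has_vector_derivative inner_commute)

lemma inner_self_le_of_norm_le: "norm u \<le> M \<Longrightarrow> u \<bullet> u \<le> M^2"
  by (metis norm_ge_zero power2_norm_eq_inner power_mono)

lemma inner_sq_le_of_norm_le:
  assumes "norm u \<le> M"
  shows "(u \<bullet> w)^2 \<le> M^2 * (w \<bullet> w)"
proof -
  have "(u \<bullet> w)^2 \<le> (u \<bullet> u) * (w \<bullet> w)" by (rule Cauchy_Schwarz_ineq)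
  also have "\<dots> \<le> M^2 * (w \<bullet> w)"
    using inner_self_le_of_norm_le[OF assms] by (rule mult_right_mono) simp
  finally show ?thesis .
qed

lemma inner_diff_self_le: "(u - w) \<bullet> (u - w) \<le> 2 * (u \<bullet> u) + 2 * (w \<bullet> w)"
  for u w :: "'a::real_inner"
proof -
  have "0 \<le> (u + w) \<bullet> (u + w)" by simp
  then show ?thesis by (simp add: inner_diff inner_add inner_commute)
qed

lemma sq_diff_diff_le: "(x - y - w)^2 \<le> 3 * x^2 + 3 * y^2 + 3 * w^2"
  for x y w :: real
proof -
  have "0 \<le> (x + y)^2 + (x + w)^2 + (y - w)^2" by simp
  then show ?thesis by (simp add: power2_eq_square algebra_simps)
qed

lemma is_solution_has_vector_derivative:
  assumes sol: "is_solution F t0 x0 x" and s: "t0 < s"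
    and cont: "isCont (\<lambda>t. F t (x t)) s"
  shows "(x has_vector_derivative F s (x s)) (at s)"
proof -
  define g where "g t = F t (x t)" for t
  have integral_eq: "(g has_integral (x t - x0)) {t0..t}" if "t \<ge> t0" for t
    using sol that unfolding is_solution_def g_def[abs_def] by blast
  have "g integrable_on {t0..s+1}"
    using integral_eq[of "s+1"] s by (auto intro: has_integral_integrable)
  moreover have "continuous (at s within {t0..s+1}) g"
    using cont unfolding g_def[abs_def] by (rule continuous_at_imp_continuous_within)
  ultimately have "((\<lambda>t. integral {t0..t} g) has_vector_derivative g s) (at s within {t0..s+1} - {})"
    using s by (intro integral_has_vector_derivative_continuous_at) auto
  moreover have "at s within {t0..s+1} - {} = at s"
    using s by (intro at_within_interior) auto
  ultimately have "((\<lambda>t. integral {t0..t} g) has_vector_derivative g s) (at s)"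
    by simp
  then have deriv: "((\<lambda>t. x0 + integral {t0..t} g) has_vector_derivative g s) (at s)"
    by (rule has_vector_derivative_add[OF has_vector_derivative_const, simplified])
  have eq: "x0 + integral {t0..t} g = x t" if "t \<in> {t0<..<s+1}" for t
    using integral_eq[of t] that by (simp add: integral_unique)
  have "(x has_vector_derivative g s) (at s)"
    by (rule has_vector_derivative_transform_within_open[OF deriv open_greaterThanLessThan])
       (use s eq in auto)
  then show ?thesis by (simp add: g_def)
qed

lemma exponential_decay_of_window_contraction:
  fixes V :: "real \<Rightarrow> real"
  assumes T: "T > 0" and \<rho>: "0 < \<rho>" "\<rho> \<le> 1" and V0: "V t0 \<ge> 0"
    and antimono: "\<And>s t. t0 \<le> s \<Longrightarrow> s \<le> t \<Longrightarrow> V t \<le> V s"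
    and window: "\<And>t. t0 \<le> t \<Longrightarrow> V (t + T) \<le> \<rho> * V t"
    and t: "t0 \<le> t"
  shows "V t \<le> V t0 / \<rho> * exp (ln \<rho> / T * (t - t0))"
proof -
  have iterate: "V (t0 + real k * T) \<le> \<rho> ^ k * V t0" for k
  proof (induction k)
    case (Suc k)
    have "V (t0 + real k * T + T) \<le> \<rho> * V (t0 + real k * T)"
      using T by (intro window) simp
    also have "\<dots> \<le> \<rho> * (\<rho> ^ k * V t0)"
      using Suc.IH \<rho> by (intro mult_left_mono) auto
    finally show ?case by (simp add: algebra_simps)
  qed simp
  define k where "k = nat \<lfloor>(t - t0) / T\<rfloor>"
  have q: "(t - t0) / T \<ge> 0" using t T by simp
  have "real k \<le> (t - t0) / T" unfolding k_def using q by linarith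
  then have "real k * T \<le> t - t0" using T by (simp add: le_divide_eq)
  then have "V t \<le> \<rho> ^ k * V t0"
    using antimono[of "t0 + real k * T" t] iterate[of k] T by simp
  moreover have "\<rho> ^ k \<le> exp (ln \<rho> / T * (t - t0)) / \<rho>"
  proof -
    have "(t - t0) / T - 1 \<le> real k" unfolding k_def using q by linarith
    then have le: "real k * ln \<rho> \<le> ((t - t0) / T - 1) * ln \<rho>"
      using \<rho> by (intro mult_right_mono_neg) auto
    have "\<rho> ^ k = exp (real k * ln \<rho>)"
      using \<rho> by (simp add: exp_of_nat_mult)
    also have "\<dots> \<le> exp (((t - t0) / T - 1) * ln \<rho>)"
      using le by (rule exp_mono)
    also have "\<dots> = exp (ln \<rho> / T * (t - t0)) / \<rho>"
      using \<rho> by (simp add: exp_diff algebra_simps)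
    finally show ?thesis .
  qed
  ultimately show ?thesis
    using V0 by (metis mult_right_mono order_trans times_divide_eq_left mult.commute)
qed

lemma outer_mult_vec: "outer u v *v w = (v \<bullet> w) *\<^sub>R u"
  by (simp add: vec_eq_iff outer_def matrix_vector_mult_def inner_vec_def
      sum_distrib_left mult.commute mult.left_commute)

lemma mat_ge_integral_outer_imp_quadratic:
  fixes \<phi> :: "real \<Rightarrow> real^'n"
  assumes \<delta>: "\<delta> > 0" and ge: "mat_ge (integral {t..t+T} (\<lambda>s. outer (\<phi> s) (\<phi> s))) (\<delta> *\<^sub>R mat 1)"
  shows "\<delta> * (v \<bullet> v) \<le> integral {t..t+T} (\<lambda>s. (\<phi> s \<bullet> v)^2)"
proof -
  have integrable: "(\<lambda>s. outer (\<phi> s) (\<phi> s)) integrable_on {t..t+T}"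
  proof (rule ccontr)
    assume "\<not> ?thesis"
    then have "0 \<le> axis i 1 \<bullet> ((0 - \<delta> *\<^sub>R mat 1) *v axis i (1::real))" for i :: 'n
      using ge unfolding mat_ge_def by (metis not_integrable_integral)
    moreover have "axis i 1 \<bullet> ((0 - \<delta> *\<^sub>R mat 1) *v axis i (1::real)) = - \<delta>" for i :: 'n
      by (simp add: inner_axis_axis scaleR_matrix_vector_assoc[symmetric] flip: scaleR_minus_left)
    ultimately show False using \<delta> by (metis neg_0_le_iff_le not_le)
  qed
  define h where "h A = v \<bullet> (A *v v)" for A :: "real^'n^'n"
  have "bounded_linear h"
    unfolding linear_conv_bounded_linear[symmetric] h_def
    by (rule linearI) (simp_all add: matrix_vector_mult_add_rdistrib inner_add_right
        scaleR_matrix_vector_assoc[symmetric])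
  moreover have "(\<lambda>s. (\<phi> s \<bullet> v)^2) = h \<circ> (\<lambda>s. outer (\<phi> s) (\<phi> s))"
    by (simp add: fun_eq_iff h_def outer_mult_vec power2_eq_square inner_commute)
  ultimately have "h (integral {t..t+T} (\<lambda>s. outer (\<phi> s) (\<phi> s))) = integral {t..t+T} (\<lambda>s. (\<phi> s \<bullet> v)^2)"
    by (simp add: integral_linear[OF integrable])
  moreover have "0 \<le> h (integral {t..t+T} (\<lambda>s. outer (\<phi> s) (\<phi> s))) - \<delta> * (v \<bullet> v)"
    using ge unfolding mat_ge_def h_def
    by (simp add: matrix_vector_mult_diff_rdistrib inner_diff_right scaleR_matrix_vector_assoc[symmetric])
  ultimately show ?thesis by simp
qed

section \<open>Window contraction of the Lyapunov function\<close>

text \<open>The constants produced in \<open>z_sq_le_quarter_V\<close> and \<open>e_sq_le_quarter_V\<close> by the choices \<open>\<eta> = \<delta> / (48 M\<^sup>2 T\<^sup>2)\<close> and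
  \<open>\<tau> = T / (1 + 4 c T)\<close>.\<close>

definition pe_gain_p :: "real \<Rightarrow> real \<Rightarrow> real \<Rightarrow> real \<Rightarrow> real \<Rightarrow> real" where
  "pe_gain_p M T \<delta> c' cz = (3 + 144 * M^4 * T^3 * cz^2 / \<delta>) / \<delta> + c'"

definition pe_gain_e :: "real \<Rightarrow> real \<Rightarrow> real \<Rightarrow> real \<Rightarrow> real" where
  "pe_gain_e M T \<delta> c = 3 * M^2 / \<delta> + (1 + 4 * c * T) / T"

definition pe_window_rate :: "real \<Rightarrow> real \<Rightarrow> real \<Rightarrow> real \<Rightarrow> real \<Rightarrow> real \<Rightarrow> real \<Rightarrow> real \<Rightarrow> real" where
  "pe_window_rate M T \<delta> a b c c' cz =
     min (min (a / (2 * pe_gain_p M T \<delta> c' cz)) (b / (2 * pe_gain_e M T \<delta> c))) (1/2)"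

lemma pe_gains_pos:
  assumes "T > 0" "\<delta> > 0" "c \<ge> 0" "c' \<ge> 0"
  shows "pe_gain_p M T \<delta> c' cz > 0" "pe_gain_e M T \<delta> c > 0"
proof -
  show "pe_gain_p M T \<delta> c' cz > 0"
    using assms unfolding pe_gain_p_def
    by (intro add_pos_nonneg divide_pos_pos) (auto intro!: add_pos_nonneg)
  have "1 + 4 * c * T > 0" using assms by (simp add: add_pos_nonneg)
  then show "pe_gain_e M T \<delta> c > 0"
    using assms unfolding pe_gain_e_def by (simp add: add_nonneg_pos)
qed

lemma pe_window_rate_bounds:
  assumes "T > 0" "\<delta> > 0" "a > 0" "b > 0" "c \<ge> 0" "c' \<ge> 0"
  shows "0 < pe_window_rate M T \<delta> a b c c' cz" "pe_window_rate M T \<delta> a b c c' cz \<le> 1/2"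
  using assms pe_gains_pos[OF assms(1,2,5,6)] by (simp_all add: pe_window_rate_def)

locale pe_lyapunov =
  fixes \<phi> z e dz de :: "real \<Rightarrow> 'a::euclidean_space"
    and t0 M T \<delta> a b c c' cz :: real
  assumes pos: "M > 0" "T > 0" "\<delta> > 0" "a > 0" "b > 0" "c \<ge> 0" "c' \<ge> 0" "cz \<ge> 0"
    and bounded: "\<And>s. s \<ge> t0 \<Longrightarrow> norm (\<phi> s) \<le> M"
    and continuous_z: "continuous_on {t0..} z"
    and continuous_e: "continuous_on {t0..} e"
    and piecewise: "\<And>\<alpha> \<beta>. t0 \<le> \<alpha> \<Longrightarrow> \<exists>S. finite S \<and> continuous_on ({\<alpha>..\<beta>} - S) \<phi> \<and>
       (\<forall>s\<in>{\<alpha><..<\<beta>} - S. (z has_vector_derivative dz s) (at s) \<and> (e has_vector_derivative de s) (at s))"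
    and decrease: "\<And>s. s \<ge> t0 \<Longrightarrow>
       2 * (z s \<bullet> dz s) + 2 * (e s \<bullet> de s) \<le> - a * (\<phi> s \<bullet> (z s + e s))^2 - b * (e s \<bullet> e s)"
    and drift: "\<And>s. s \<ge> t0 \<Longrightarrow> norm (dz s) \<le> cz * \<bar>\<phi> s \<bullet> (z s + e s)\<bar>"
    and growth: "\<And>s. s \<ge> t0 \<Longrightarrow>
       2 * (e s \<bullet> de s) \<ge> - c * (e s \<bullet> e s) - c' * (\<phi> s \<bullet> (z s + e s))^2"
    and excitation: "\<And>t v. t \<ge> t0 \<Longrightarrow> \<delta> * (v \<bullet> v) \<le> integral {t..t+T} (\<lambda>s. (\<phi> s \<bullet> v)^2)"
begin

definition V :: "real \<Rightarrow> real" where "V s = z s \<bullet> z s + e s \<bullet> e s"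

definition p :: "real \<Rightarrow> real" where "p s = \<phi> s \<bullet> (z s + e s)"

lemma V_nonneg: "V s \<ge> 0"
  by (simp add: V_def)

lemma continuous_on_V: "t0 \<le> \<alpha> \<Longrightarrow> continuous_on {\<alpha>..\<beta>} V"
  unfolding V_def
  by (intro continuous_intros; rule continuous_on_subset[OF continuous_z]
      continuous_on_subset[OF continuous_e]; auto)

lemma integrable_inner_phi_sq:
  assumes "t0 \<le> \<alpha>" and w: "continuous_on {\<alpha>..\<beta>} w"
  shows "(\<lambda>s. (\<phi> s \<bullet> w s)^2) integrable_on {\<alpha>..\<beta>}"
proof -
  obtain S where S: "finite S" "continuous_on ({\<alpha>..\<beta>} - S) \<phi>"
    using piecewise[OF assms(1)] by blast
  obtain B where B: "\<And>s. s \<in> {\<alpha>..\<beta>} \<Longrightarrow> norm (w s) \<le> B"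
    using compact_imp_bounded[OF compact_continuous_image[OF w compact_Icc]]
    unfolding bounded_iff by (metis imageI)
  show ?thesis
  proof (rule integrable_on_bounded_continuous_off_finite[OF S(1), where B = "(M * B)^2"])
    show "continuous_on ({\<alpha>..\<beta>} - S) (\<lambda>s. (\<phi> s \<bullet> w s)\<^sup>2)"
      by (intro continuous_intros S(2) continuous_on_subset[OF w]) auto
    fix s assume s: "s \<in> {\<alpha>..\<beta>}"
    have "\<bar>\<phi> s \<bullet> w s\<bar> \<le> norm (\<phi> s) * norm (w s)" by (rule Cauchy_Schwarz_ineq2)
    also have "\<dots> \<le> M * B"
      using bounded[of s] B[OF s] s assms(1) pos by (intro mult_mono) auto
    finally show "\<bar>(\<phi> s \<bullet> w s)\<^sup>2\<bar> \<le> (M * B)\<^sup>2"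
      by (metis abs_ge_zero abs_power2 power2_abs power_mono)
  qed
qed

lemma integrable_p_sq: "t0 \<le> \<alpha> \<Longrightarrow> (\<lambda>s. (p s)^2) integrable_on {\<alpha>..\<beta>}"
  unfolding p_def
  by (rule integrable_inner_phi_sq)
     (auto intro!: continuous_intros continuous_on_subset[OF continuous_z] continuous_on_subset[OF continuous_e])

lemma integrable_e_sq: "t0 \<le> \<alpha> \<Longrightarrow> (\<lambda>s. e s \<bullet> e s) integrable_on {\<alpha>..\<beta>}"
  by (intro integrable_continuous_interval continuous_intros; rule continuous_on_subset[OF continuous_e]; auto)

lemma integrable_z_diff_sq: "t0 \<le> \<alpha> \<Longrightarrow> (\<lambda>s. (z s - v) \<bullet> (z s - v)) integrable_on {\<alpha>..\<beta>}"
  by (intro integrable_continuous_interval continuous_intros; rule continuous_on_subset[OF continuous_z]; auto)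

lemma integral_const_plus_p_sq:
  assumes "t0 \<le> t" "t \<le> s" "s \<le> t + T" "0 \<le> A" "0 \<le> B"
  shows "integral {t..s} (\<lambda>u. A + B * (p u)^2) \<le> A * (s - t) + B * integral {t..t+T} (\<lambda>u. (p u)^2)"
proof -
  have "integral {t..s} (\<lambda>u. A + B * (p u)^2) = A * (s - t) + B * integral {t..s} (\<lambda>u. (p u)^2)"
    using assms(2) integral_add[OF integrable_const_ivl integrable_on_mult_right[OF integrable_p_sq[OF assms(1)]]]
    by simp
  also have "integral {t..s} (\<lambda>u. (p u)^2) \<le> integral {t..t+T} (\<lambda>u. (p u)^2)"
    using assms integrable_p_sq[OF assms(1)] by (intro integral_subset_le) auto
  finally show ?thesis using assms(5) by (simp add: mult_left_mono)
qed

lemma V_diff_le_integral: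
  assumes "t0 \<le> \<alpha>" "\<alpha> \<le> \<beta>"
  shows "V \<beta> - V \<alpha> \<le> integral {\<alpha>..\<beta>} (\<lambda>s. - a * (p s)^2 - b * (e s \<bullet> e s))"
proof -
  obtain S where S: "finite S"
    "\<forall>s\<in>{\<alpha><..<\<beta>} - S. (z has_vector_derivative dz s) (at s) \<and> (e has_vector_derivative de s) (at s)"
    using piecewise[OF assms(1)] by blast
  show ?thesis
  proof (rule diff_le_integral_of_derivative_le[OF S(1) assms(2) continuous_on_V[OF assms(1)]])
    fix s assume s: "s \<in> {\<alpha><..<\<beta>} - S"
    show "(V has_real_derivative 2 * (z s \<bullet> dz s) + 2 * (e s \<bullet> de s)) (at s)"
      unfolding V_def using S(2) s by (intro DERIV_add has_real_derivative_inner_self) auto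
    show "2 * (z s \<bullet> dz s) + 2 * (e s \<bullet> de s) \<le> - a * (p s)^2 - b * (e s \<bullet> e s)"
      using decrease[of s] s assms by (auto simp: p_def)
  next
    show "(\<lambda>s. - a * (p s)^2 - b * (e s \<bullet> e s)) integrable_on {\<alpha>..\<beta>}"
      using integrable_p_sq[OF assms(1)] integrable_e_sq[OF assms(1)]
      by (intro integrable_diff integrable_on_mult_right) auto
  qed
qed

lemma V_antimono:
  assumes "t0 \<le> \<alpha>" "\<alpha> \<le> \<beta>"
  shows "V \<beta> \<le> V \<alpha>"
proof -
  have "- a * (p s)^2 - b * (e s \<bullet> e s) \<le> 0" for s
  proof -
    have "0 \<le> a * (p s)^2" "0 \<le> b * (e s \<bullet> e s)" using pos(4,5) by simp_all
    then show ?thesis by linarith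
  qed
  then have "integral {\<alpha>..\<beta>} (\<lambda>s. - a * (p s)^2 - b * (e s \<bullet> e s)) \<le> integral {\<alpha>..\<beta>} (\<lambda>s. 0)"
    using integrable_p_sq[OF assms(1)] integrable_e_sq[OF assms(1)]
    by (intro integral_le integrable_diff integrable_on_mult_right) auto
  then show ?thesis using V_diff_le_integral[OF assms] by simp
qed

lemma z_drift_bound:
  assumes "t0 \<le> t" "t \<le> s" "s \<le> t + T" and \<eta>: "\<eta> > 0"
  shows "(z s - z t) \<bullet> (z s - z t) \<le> 4 * \<eta> * V t * T + (cz^2 / \<eta>) * integral {t..t+T} (\<lambda>u. (p u)^2)"
proof -
  obtain S where S: "finite S"
    "\<forall>u\<in>{t<..<s} - S. (z has_vector_derivative dz u) (at u) \<and> (e has_vector_derivative de u) (at u)"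
    using piecewise[OF assms(1)] by blast
  have "(z s - z t) \<bullet> (z s - z t) - (z t - z t) \<bullet> (z t - z t)
      \<le> integral {t..s} (\<lambda>u. 4 * \<eta> * V t + (cz^2 / \<eta>) * (p u)^2)"
  proof (rule diff_le_integral_of_derivative_le[OF S(1) assms(2), where f = "\<lambda>u. (z u - z t) \<bullet> (z u - z t)"])
    show "continuous_on {t..s} (\<lambda>u. (z u - z t) \<bullet> (z u - z t))"
      using assms(1) by (auto intro!: continuous_intros continuous_on_subset[OF continuous_z])
    fix u assume u: "u \<in> {t<..<s} - S"
    have "((\<lambda>u. z u - z t) has_vector_derivative dz u) (at u)"
      using S(2) u by (auto intro!: derivative_eq_intros)
    then show "((\<lambda>u. (z u - z t) \<bullet> (z u - z t)) has_real_derivative 2 * ((z u - z t) \<bullet> dz u)) (at u)"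
      by (rule has_real_derivative_inner_self)
    have u0: "t0 \<le> u" "t \<le> u" using u assms by auto
    have "(z u - z t) \<bullet> (z u - z t) \<le> 2 * (z u \<bullet> z u) + 2 * (z t \<bullet> z t)"
      by (rule inner_diff_self_le)
    also have "\<dots> \<le> 2 * V u + 2 * V t" unfolding V_def by (simp add: add_mono)
    also have "\<dots> \<le> 4 * V t" using V_antimono[OF assms(1) u0(2)] by simp
    finally have zu: "(norm (z u - z t))^2 \<le> 4 * V t" by (simp add: power2_norm_eq_inner)
    have "0 \<le> (\<eta> * norm (z u - z t) - cz * \<bar>p u\<bar>)^2 / \<eta>" using \<eta> by simp
    then have "2 * norm (z u - z t) * (cz * \<bar>p u\<bar>) \<le> \<eta> * (norm (z u - z t))^2 + (cz^2 / \<eta>) * (p u)^2"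
      using \<eta> by (simp add: field_simps power2_eq_square)
    moreover have "2 * ((z u - z t) \<bullet> dz u) \<le> 2 * norm (z u - z t) * (cz * \<bar>p u\<bar>)"
      using norm_cauchy_schwarz[of "z u - z t" "dz u"] drift[OF u0(1)]
        mult_left_mono[of "norm (dz u)" "cz * \<bar>p u\<bar>" "norm (z u - z t)"]
      by (simp add: p_def)
    moreover have "\<eta> * (norm (z u - z t))^2 \<le> 4 * \<eta> * V t" using zu \<eta> by simp
    ultimately show "2 * ((z u - z t) \<bullet> dz u) \<le> 4 * \<eta> * V t + (cz^2 / \<eta>) * (p u)^2"
      by linarith
  next
    show "(\<lambda>u. 4 * \<eta> * V t + (cz^2 / \<eta>) * (p u)^2) integrable_on {t..s}"
      using integrable_p_sq[OF assms(1)] by (intro integrable_add integrable_on_mult_right) auto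
  qed
  also have "\<dots> \<le> 4 * \<eta> * V t * (s - t) + (cz^2 / \<eta>) * integral {t..t+T} (\<lambda>u. (p u)^2)"
    using assms V_nonneg[of t] by (intro integral_const_plus_p_sq) auto
  also have "4 * \<eta> * V t * (s - t) \<le> 4 * \<eta> * V t * T"
    using assms V_nonneg[of t] by (intro mult_left_mono) auto
  finally show ?thesis by simp
qed

lemma e_sq_lower:
  assumes "t0 \<le> t" "t \<le> s" "s \<le> t + T"
  shows "e t \<bullet> e t - e s \<bullet> e s \<le> c * V t * (s - t) + c' * integral {t..t+T} (\<lambda>u. (p u)^2)"
proof -
  obtain S where S: "finite S"
    "\<forall>u\<in>{t<..<s} - S. (z has_vector_derivative dz u) (at u) \<and> (e has_vector_derivative de u) (at u)"
    using piecewise[OF assms(1)] by blast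
  have "- (e s \<bullet> e s) - - (e t \<bullet> e t) \<le> integral {t..s} (\<lambda>u. c * V t + c' * (p u)^2)"
  proof (rule diff_le_integral_of_derivative_le[OF S(1) assms(2), where f = "\<lambda>u. - (e u \<bullet> e u)"])
    show "continuous_on {t..s} (\<lambda>u. - (e u \<bullet> e u))"
      using assms(1) by (auto intro!: continuous_intros continuous_on_subset[OF continuous_e])
    fix u assume u: "u \<in> {t<..<s} - S"
    show "((\<lambda>u. - (e u \<bullet> e u)) has_real_derivative - (2 * (e u \<bullet> de u))) (at u)"
      using S(2) u by (intro DERIV_minus has_real_derivative_inner_self) auto
    have u0: "t0 \<le> u" "t \<le> u" using u assms by auto
    have "e u \<bullet> e u \<le> V t"
      using V_antimono[OF assms(1) u0(2)] inner_ge_zero[of "z u"] unfolding V_def by linarith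
    then have "c * (e u \<bullet> e u) \<le> c * V t" using pos(6) by (rule mult_left_mono)
    then show "- (2 * (e u \<bullet> de u)) \<le> c * V t + c' * (p u)^2"
      using growth[OF u0(1)] unfolding p_def by linarith
  next
    show "(\<lambda>u. c * V t + c' * (p u)^2) integrable_on {t..s}"
      using integrable_p_sq[OF assms(1)] by (intro integrable_add integrable_on_mult_right) auto
  qed
  also have "\<dots> \<le> c * V t * (s - t) + c' * integral {t..t+T} (\<lambda>u. (p u)^2)"
    using assms pos V_nonneg[of t] by (intro integral_const_plus_p_sq) auto
  finally show ?thesis by simp
qed

lemma z_sq_le_integrals:
  assumes t: "t0 \<le> t" and \<eta>: "\<eta> > 0"
  shows "\<delta> * (z t \<bullet> z t) \<le> 3 * integral {t..t+T} (\<lambda>u. (p u)^2)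
      + 3 * M^2 * integral {t..t+T} (\<lambda>u. e u \<bullet> e u)
      + 3 * M^2 * T * (4 * \<eta> * V t * T + (cz^2 / \<eta>) * integral {t..t+T} (\<lambda>u. (p u)^2))"
proof -
  define I where "I = integral {t..t+T} (\<lambda>u. (p u)^2)"
  define J where "J = integral {t..t+T} (\<lambda>u. e u \<bullet> e u)"
  define D where "D = 4 * \<eta> * V t * T + (cz^2 / \<eta>) * I"
  define f where "f u = (z u - z t) \<bullet> (z u - z t)" for u
  have ip: "(\<lambda>u. 3 * (p u)^2) integrable_on {t..t+T}"
    by (rule integrable_on_mult_right[OF integrable_p_sq[OF t]])
  have ie: "(\<lambda>u. 3 * M^2 * (e u \<bullet> e u)) integrable_on {t..t+T}"
    by (rule integrable_on_mult_right[OF integrable_e_sq[OF t]])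
  have iz: "(\<lambda>u. 3 * M^2 * f u) integrable_on {t..t+T}"
    unfolding f_def by (rule integrable_on_mult_right[OF integrable_z_diff_sq[OF t]])
  \<comment> \<open>split \<open>\<phi> \<bullet> z t\<close> into the prediction error, the error term and the drift of \<open>z\<close>\<close>
  have "\<delta> * (z t \<bullet> z t) \<le> integral {t..t+T} (\<lambda>u. (\<phi> u \<bullet> z t)^2)"
    by (rule excitation[OF t])
  also have "\<dots> \<le> integral {t..t+T} (\<lambda>u. 3 * (p u)^2 + 3 * M^2 * (e u \<bullet> e u) + 3 * M^2 * f u)"
  proof (rule integral_le[OF integrable_inner_phi_sq[OF t continuous_on_const] integrable_add[OF integrable_add[OF ip ie] iz]])
    fix u assume "u \<in> {t..t+T}"
    then have u: "t0 \<le> u" using t by auto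
    have "\<phi> u \<bullet> z t = p u - \<phi> u \<bullet> e u - \<phi> u \<bullet> (z u - z t)"
      unfolding p_def by (simp add: inner_add_right inner_diff_right)
    then have "(\<phi> u \<bullet> z t)^2 \<le> 3 * (p u)^2 + 3 * (\<phi> u \<bullet> e u)^2 + 3 * (\<phi> u \<bullet> (z u - z t))^2"
      using sq_diff_diff_le by presburger
    then show "(\<phi> u \<bullet> z t)^2 \<le> 3 * (p u)^2 + 3 * M^2 * (e u \<bullet> e u) + 3 * M^2 * f u"
      using inner_sq_le_of_norm_le[OF bounded[OF u], of "e u"]
        inner_sq_le_of_norm_le[OF bounded[OF u], of "z u - z t"]
      unfolding f_def by linarith
  qed
  also have "\<dots> = 3 * I + 3 * M^2 * J + 3 * M^2 * integral {t..t+T} f"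
    unfolding I_def J_def by (simp add: integral_add[OF integrable_add[OF ip ie] iz] integral_add[OF ip ie])
  also have "integral {t..t+T} f \<le> integral {t..t+T} (\<lambda>u. D)"
    using integrable_z_diff_sq[OF t] z_drift_bound[OF t _ _ \<eta>]
    by (intro integral_le) (auto simp: f_def[abs_def] D_def I_def)
  also have "integral {t..t+T} (\<lambda>u. D) = T * D" using pos(2) by simp
  finally show ?thesis
    using pos(1) by (simp add: I_def J_def D_def mult_left_mono mult.assoc)
qed

lemma e_sq_le_integrals:
  assumes t: "t0 \<le> t" and \<tau>: "0 < \<tau>" "\<tau> \<le> T"
  shows "e t \<bullet> e t \<le> integral {t..t+T} (\<lambda>u. e u \<bullet> e u) / \<tau> + c * V t * \<tau>
      + c' * integral {t..t+T} (\<lambda>u. (p u)^2)"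
proof -
  define A where "A = e t \<bullet> e t - c * V t * \<tau> - c' * integral {t..t+T} (\<lambda>u. (p u)^2)"
  have "A \<le> e u \<bullet> e u" if "u \<in> {t..t+\<tau>}" for u
  proof -
    have "c * V t * (u - t) \<le> c * V t * \<tau>"
      using that pos(6) V_nonneg[of t] by (intro mult_left_mono) auto
    then show ?thesis using e_sq_lower[OF t, of u] that \<tau> unfolding A_def by auto
  qed
  then have "integral {t..t+\<tau>} (\<lambda>u. A) \<le> integral {t..t+\<tau>} (\<lambda>u. e u \<bullet> e u)"
    by (intro integral_le integrable_e_sq[OF t]) auto
  also have "\<dots> \<le> integral {t..t+T} (\<lambda>u. e u \<bullet> e u)"
    using \<tau> by (intro integral_subset_le integrable_e_sq[OF t]) auto
  finally have "\<tau> * A \<le> integral {t..t+T} (\<lambda>u. e u \<bullet> e u)" using \<tau> by simp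
  then have "A \<le> integral {t..t+T} (\<lambda>u. e u \<bullet> e u) / \<tau>"
    using \<tau> by (simp add: le_divide_eq mult.commute)
  then show ?thesis unfolding A_def by simp
qed

lemma z_sq_le_quarter_V:
  assumes t: "t0 \<le> t"
  shows "z t \<bullet> z t \<le> V t / 4 + ((3 + 144 * M^4 * T^3 * cz^2 / \<delta>) / \<delta>) * integral {t..t+T} (\<lambda>u. (p u)^2)
      + (3 * M^2 / \<delta>) * integral {t..t+T} (\<lambda>u. e u \<bullet> e u)"
proof -
  define I where "I = integral {t..t+T} (\<lambda>u. (p u)^2)"
  define J where "J = integral {t..t+T} (\<lambda>u. e u \<bullet> e u)"
  define K where "K = 144 * M^4 * T^3 * cz^2 / \<delta>"
  define \<eta> where "\<eta> = \<delta> / (48 * M^2 * T^2)"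
  have \<eta>: "\<eta> > 0" using pos by (simp add: \<eta>_def)
  \<comment> \<open>\<open>\<eta>\<close> is chosen so that the drift of \<open>z\<close> costs only a quarter of \<open>V t\<close>\<close>
  have E1: "3 * M^2 * T * (4 * \<eta> * V t * T) = \<delta> * V t / 4"
    using pos by (simp add: \<eta>_def field_simps power2_eq_square)
  have E2: "3 * M^2 * T * (cz^2 / \<eta>) = K"
    using pos by (simp add: \<eta>_def K_def field_simps power2_eq_square power4_eq_xxxx power3_eq_cube)
  have "3 * M^2 * T * (4 * \<eta> * V t * T + (cz^2 / \<eta>) * I)
      = 3 * M^2 * T * (4 * \<eta> * V t * T) + (3 * M^2 * T * (cz^2 / \<eta>)) * I"
    by (simp add: algebra_simps)
  then have "3 * M^2 * T * (4 * \<eta> * V t * T + (cz^2 / \<eta>) * I) = \<delta> * V t / 4 + K * I"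
    unfolding E1 E2 .
  moreover have "\<delta> * (z t \<bullet> z t) \<le> 3 * I + 3 * M^2 * J + 3 * M^2 * T * (4 * \<eta> * V t * T + (cz^2 / \<eta>) * I)"
    using z_sq_le_integrals[OF t \<eta>] unfolding I_def J_def .
  ultimately have "\<delta> * (z t \<bullet> z t) \<le> \<delta> * V t / 4 + 3 * I + K * I + 3 * M^2 * J"
    by linarith
  also have "\<dots> = \<delta> * (V t / 4 + ((3 + K) / \<delta>) * I + (3 * M^2 / \<delta>) * J)"
    using pos(3) by (simp add: field_simps)
  finally show ?thesis
    using pos(3) unfolding I_def J_def K_def by simp
qed

lemma e_sq_le_quarter_V:
  assumes t: "t0 \<le> t"
  shows "e t \<bullet> e t \<le> V t / 4 + c' * integral {t..t+T} (\<lambda>u. (p u)^2)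
      + ((1 + 4 * c * T) / T) * integral {t..t+T} (\<lambda>u. e u \<bullet> e u)"
proof -
  define \<tau> where "\<tau> = T / (1 + 4 * c * T)"
  have d: "0 < 1 + 4 * c * T" using pos(2,6) by (simp add: add_pos_nonneg)
  have "0 < \<tau>" unfolding \<tau>_def using pos(2) d by simp
  moreover have "\<tau> \<le> T"
    unfolding \<tau>_def pos_divide_le_eq[OF d] using pos(2,6) by (simp add: algebra_simps)
  moreover have "c * \<tau> \<le> 1/4"
    unfolding \<tau>_def times_divide_eq_right pos_divide_le_eq[OF d] by (simp add: algebra_simps)
  then have "c * V t * \<tau> \<le> V t / 4"
    using mult_right_mono[OF \<open>c * \<tau> \<le> 1/4\<close> V_nonneg[of t]] by (simp add: algebra_simps)
  moreover have "integral {t..t+T} (\<lambda>u. e u \<bullet> e u) / \<tau>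
      = ((1 + 4 * c * T) / T) * integral {t..t+T} (\<lambda>u. e u \<bullet> e u)"
    unfolding \<tau>_def by simp
  ultimately show ?thesis
    using e_sq_le_integrals[OF t, of \<tau>] by linarith
qed

lemma V_le_integrals:
  assumes t: "t0 \<le> t"
  shows "V t \<le> 2 * pe_gain_p M T \<delta> c' cz * integral {t..t+T} (\<lambda>u. (p u)^2)
      + 2 * pe_gain_e M T \<delta> c * integral {t..t+T} (\<lambda>u. e u \<bullet> e u)"
proof -
  define I where "I = integral {t..t+T} (\<lambda>u. (p u)^2)"
  define J where "J = integral {t..t+T} (\<lambda>u. e u \<bullet> e u)"
  define K where "K = 144 * M^4 * T^3 * cz^2 / \<delta>"
  have "pe_gain_p M T \<delta> c' cz * I = ((3 + K) / \<delta>) * I + c' * I"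
    "pe_gain_e M T \<delta> c * J = (3 * M^2 / \<delta>) * J + ((1 + 4 * c * T) / T) * J"
    by (simp_all add: pe_gain_p_def pe_gain_e_def K_def algebra_simps)
  then have "V t \<le> V t / 2 + pe_gain_p M T \<delta> c' cz * I + pe_gain_e M T \<delta> c * J"
    using z_sq_le_quarter_V[OF t] e_sq_le_quarter_V[OF t]
    unfolding V_def I_def J_def K_def by linarith
  then show ?thesis unfolding I_def J_def by simp
qed

lemma V_window_contraction:
  assumes t: "t0 \<le> t"
  shows "V (t + T) \<le> (1 - pe_window_rate M T \<delta> a b c c' cz) * V t"
proof -
  define \<kappa> where "\<kappa> = pe_window_rate M T \<delta> a b c c' cz"
  define I where "I = integral {t..t+T} (\<lambda>u. (p u)^2)"
  define J where "J = integral {t..t+T} (\<lambda>u. e u \<bullet> e u)"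
  define Kp where "Kp = pe_gain_p M T \<delta> c' cz"
  define Ke where "Ke = pe_gain_e M T \<delta> c"
  have K: "Kp > 0" "Ke > 0" using pe_gains_pos pos unfolding Kp_def Ke_def by auto
  have IJ: "I \<ge> 0" "J \<ge> 0"
    unfolding I_def J_def by (auto intro!: integral_nonneg integrable_p_sq[OF t] integrable_e_sq[OF t])
  have "V (t + T) - V t \<le> integral {t..t+T} (\<lambda>s. - a * (p s)^2 - b * (e s \<bullet> e s))"
    using V_diff_le_integral[OF t] pos(2) by simp
  also have "\<dots> = - a * I - b * J" unfolding I_def J_def
    by (subst integral_diff[OF integrable_on_mult_right[OF integrable_p_sq[OF t]]
          integrable_on_mult_right[OF integrable_e_sq[OF t]]], subst integral_mult_right,
        subst integral_mult_right) simp
  finally have decrease: "V (t + T) - V t \<le> - a * I - b * J" .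
  have "\<kappa> \<le> a / (2 * Kp)" "\<kappa> \<le> b / (2 * Ke)" "\<kappa> > 0"
    using pe_window_rate_bounds[OF pos(2-7)]
    unfolding \<kappa>_def pe_window_rate_def Kp_def Ke_def by auto
  then have "\<kappa> * (2 * Kp) \<le> a" "\<kappa> * (2 * Ke) \<le> b"
    using K by (simp_all add: le_divide_eq)
  then have "\<kappa> * (2 * Kp * I + 2 * Ke * J) \<le> a * I + b * J"
    using IJ by (simp add: distrib_left) (metis add_mono mult.assoc mult.commute mult_right_mono)
  moreover have "\<kappa> * V t \<le> \<kappa> * (2 * Kp * I + 2 * Ke * J)"
    using V_le_integrals[OF t] \<open>\<kappa> > 0\<close> unfolding Kp_def Ke_def I_def J_def by simp
  ultimately show ?thesis using decrease unfolding \<kappa>_def by (simp add: algebra_simps)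
qed

lemma V_exponential_bound:
  assumes "t0 \<le> t"
  shows "V t \<le> V t0 / (1 - pe_window_rate M T \<delta> a b c c' cz)
      * exp (ln (1 - pe_window_rate M T \<delta> a b c c' cz) / T * (t - t0))"
proof (rule exponential_decay_of_window_contraction[OF pos(2) _ _ _ _ _ assms])
  show "0 < 1 - pe_window_rate M T \<delta> a b c c' cz" "1 - pe_window_rate M T \<delta> a b c c' cz \<le> 1"
    using pe_window_rate_bounds[OF pos(2-7), of M cz] by auto
qed (use V_nonneg V_antimono V_window_contraction in auto)

end

section \<open>Exponential stability of the error system\<close>

lemma error_coordinates_equivalent:
  fixes y :: "'a::euclidean_space \<times> 'a" and \<theta>s :: 'a
  defines "E \<equiv> (snd y - \<theta>s) \<bullet> (snd y - \<theta>s) + (fst y - snd y) \<bullet> (fst y - snd y)"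
  shows "(norm (y - (\<theta>s, \<theta>s)))^2 \<le> 3 * E" and "E \<le> 3 * (norm (y - (\<theta>s, \<theta>s)))^2"
proof -
  define A where "A = fst y - \<theta>s"
  define B where "B = snd y - \<theta>s"
  have norm_eq: "(norm (y - (\<theta>s, \<theta>s)))^2 = A \<bullet> A + B \<bullet> B"
    by (cases y) (simp add: A_def B_def norm_Pair power2_norm_eq_inner)
  have E_eq: "E = B \<bullet> B + (A - B) \<bullet> (A - B)"
    by (simp add: E_def A_def B_def)
  have "A \<bullet> A \<le> 2 * (B \<bullet> B) + 2 * ((A - B) \<bullet> (A - B))"
    using inner_diff_self_le[of B "B - A"] by (simp add: inner_diff inner_commute algebra_simps)
  then show "(norm (y - (\<theta>s, \<theta>s)))^2 \<le> 3 * E"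
    unfolding norm_eq E_eq using inner_ge_zero[of "A - B"] by argo
  show "E \<le> 3 * (norm (y - (\<theta>s, \<theta>s)))^2"
    unfolding norm_eq E_eq using inner_diff_self_le[of A B] inner_ge_zero[of A] by argo
qed

locale pe_system =
  fixes \<phi> :: "real \<Rightarrow> 'a::euclidean_space" and F :: "real \<Rightarrow> 'a \<times> 'a \<Rightarrow> 'a \<times> 'a" and \<theta>s :: 'a
    and M T \<delta> a b c c' cz :: real
  assumes pos: "M > 0" "T > 0" "\<delta> > 0" "a > 0" "b > 0" "c \<ge> 0" "c' \<ge> 0" "cz \<ge> 0"
    and piecewise_continuous: "piecewise_continuous_nonneg \<phi>"
    and bounded: "\<And>t. 0 \<le> t \<Longrightarrow> norm (\<phi> t) \<le> M"
    and excitation: "\<And>t v. 0 \<le> t \<Longrightarrow> \<delta> * (v \<bullet> v) \<le> integral {t..t+T} (\<lambda>s. (\<phi> s \<bullet> v)^2)"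
    and continuous_along: "\<And>x s. isCont \<phi> s \<Longrightarrow> isCont x s \<Longrightarrow> isCont (\<lambda>t. F t (x t)) s"
    and decrease: "\<And>s y. 0 \<le> s \<Longrightarrow>
       2 * ((snd y - \<theta>s) \<bullet> snd (F s y)) + 2 * ((fst y - snd y) \<bullet> (fst (F s y) - snd (F s y)))
         \<le> - a * (\<phi> s \<bullet> (fst y - \<theta>s))^2 - b * ((fst y - snd y) \<bullet> (fst y - snd y))"
    and drift: "\<And>s y. 0 \<le> s \<Longrightarrow> norm (snd (F s y)) \<le> cz * \<bar>\<phi> s \<bullet> (fst y - \<theta>s)\<bar>"
    and growth: "\<And>s y. 0 \<le> s \<Longrightarrow>
       2 * ((fst y - snd y) \<bullet> (fst (F s y) - snd (F s y)))
         \<ge> - c * ((fst y - snd y) \<bullet> (fst y - snd y)) - c' * (\<phi> s \<bullet> (fst y - \<theta>s))^2"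
begin

lemma lyapunov_along_solution:
  assumes t0: "0 \<le> t0" and sol: "is_solution F t0 x0 x"
  shows "pe_lyapunov \<phi> (\<lambda>s. snd (x s) - \<theta>s) (\<lambda>s. fst (x s) - snd (x s))
      (\<lambda>s. snd (F s (x s))) (\<lambda>s. fst (F s (x s)) - snd (F s (x s))) t0 M T \<delta> a b c c' cz"
proof -
  have x: "continuous_on {t0..} x" using sol by (simp add: is_solution_def)
  have ze: "(snd (x s) - \<theta>s) + (fst (x s) - snd (x s)) = fst (x s) - \<theta>s" for s
    by simp
  show ?thesis
  proof (unfold_locales, unfold ze)
    fix \<alpha> \<beta> assume \<alpha>: "t0 \<le> \<alpha>"
    obtain S where S: "finite S" "continuous_on ({\<alpha>..\<beta>} - S) \<phi>"
      using piecewise_continuous \<alpha> t0 unfolding piecewise_continuous_nonneg_def by (meson order_trans)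
    have "(x has_vector_derivative F s (x s)) (at s)" if s: "s \<in> {\<alpha><..<\<beta>} - S" for s
    proof (rule is_solution_has_vector_derivative[OF sol])
      have "open ({\<alpha><..<\<beta>} - S)" using S(1) by (simp add: open_Diff finite_imp_closed)
      moreover have "continuous_on ({\<alpha><..<\<beta>} - S) \<phi>" by (rule continuous_on_subset[OF S(2)]) auto
      ultimately have "isCont \<phi> s" using s by (simp add: continuous_on_eq_continuous_at)
      moreover have "continuous_on {t0<..} x" by (rule continuous_on_subset[OF x]) auto
      then have "isCont x s" using s \<alpha> by (simp add: continuous_on_eq_continuous_at)
      ultimately show "isCont (\<lambda>t. F t (x t)) s" by (rule continuous_along)
    qed (use s \<alpha> in auto)
    then show "\<exists>S. finite S \<and> continuous_on ({\<alpha>..\<beta>} - S) \<phi> \<and> (\<forall>s\<in>{\<alpha><..<\<beta>} - S.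
        ((\<lambda>s. snd (x s) - \<theta>s) has_vector_derivative snd (F s (x s))) (at s) \<and>
        ((\<lambda>s. fst (x s) - snd (x s)) has_vector_derivative fst (F s (x s)) - snd (F s (x s))) (at s))"
      using S by (intro exI[of _ S]) (auto intro!: derivative_eq_intros
          bounded_linear.has_vector_derivative[OF bounded_linear_snd]
          bounded_linear.has_vector_derivative[OF bounded_linear_fst])
  qed (use pos bounded t0 x excitation decrease drift growth in \<open>auto intro!: continuous_intros\<close>)
qed

theorem UGES: "UGES F (\<theta>s, \<theta>s)"
proof -
  define \<rho> where "\<rho> = 1 - pe_window_rate M T \<delta> a b c c' cz"
  define \<alpha> where "\<alpha> = - ln \<rho> / (2 * T)"
  have \<rho>: "0 < \<rho>" "\<rho> < 1"
    using pe_window_rate_bounds[OF pos(2-7), of M cz] unfolding \<rho>_def by auto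
  have "ln \<rho> < 0" using \<rho> by simp
  then have \<alpha>: "\<alpha> > 0" unfolding \<alpha>_def using pos(2) by (intro divide_pos_pos) auto
  have decay: "(3 / sqrt \<rho> * n * exp (- \<alpha> * (t - t0)))^2 = 9 * n^2 / \<rho> * exp (ln \<rho> / T * (t - t0))"
    for n t t0 :: real
    using \<rho> pos(2) by (simp add: power_mult_distrib power_divide \<alpha>_def exp_double[symmetric] field_simps)
  have "norm (x t - (\<theta>s, \<theta>s)) \<le> 3 / sqrt \<rho> * norm (x0 - (\<theta>s, \<theta>s)) * exp (- \<alpha> * (t - t0))"
    if t0: "0 \<le> t0" and sol: "is_solution F t0 x0 x" and t: "t0 \<le> t" for t0 x0 x t
  proof -
    interpret L: pe_lyapunov \<phi> "\<lambda>s. snd (x s) - \<theta>s" "\<lambda>s. fst (x s) - snd (x s)"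
      "\<lambda>s. snd (F s (x s))" "\<lambda>s. fst (F s (x s)) - snd (F s (x s))" t0 M T \<delta> a b c c' cz
      by (rule lyapunov_along_solution[OF t0 sol])
    define E where "E = exp (ln \<rho> / T * (t - t0))"
    have "x t0 = x0" using sol by (simp add: is_solution_def)
    then have V0: "L.V t0 \<le> 3 * (norm (x0 - (\<theta>s, \<theta>s)))^2"
      using error_coordinates_equivalent(2)[of x0 \<theta>s] by (simp add: L.V_def)
    have "(norm (x t - (\<theta>s, \<theta>s)))^2 \<le> 3 * L.V t"
      using error_coordinates_equivalent(1)[of "x t" \<theta>s] by (simp add: L.V_def)
    also have "\<dots> \<le> 3 * (L.V t0 / \<rho> * E)"
      using L.V_exponential_bound[OF t] unfolding \<rho>_def E_def by simp
    also have "\<dots> \<le> 3 * (3 * (norm (x0 - (\<theta>s, \<theta>s)))^2 / \<rho> * E)"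
      using V0 \<rho> by (intro mult_left_mono mult_right_mono divide_right_mono) (auto simp: E_def)
    also have "\<dots> = (3 / sqrt \<rho> * norm (x0 - (\<theta>s, \<theta>s)) * exp (- \<alpha> * (t - t0)))^2"
      unfolding decay E_def by simp
    finally show ?thesis
      by (rule power2_le_imp_le) (use \<rho> in simp)
  qed
  then show ?thesis
    unfolding UGES_def using \<rho> \<alpha> by (intro exI[of _ "3 / sqrt \<rho>"] exI[of _ \<alpha>]) auto
qed

end

section \<open>The two adaptive laws\<close>

lemma adaptive_law_decrease:
  fixes u z e :: "'a::real_inner"
  assumes k: "0 \<le> k"
  shows "2 * (z \<bullet> (- (k * (u \<bullet> (z + e))) *\<^sub>R u)) + 2 * (e \<bullet> (- d *\<^sub>R e + (k * (u \<bullet> (z + e))) *\<^sub>R u))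
      \<le> - (k / 2) * (u \<bullet> (z + e))^2 - (2 * d - 8/3 * k * (u \<bullet> u)) * (e \<bullet> e)"
proof -
  define P where "P = u \<bullet> (z + e)"
  define q where "q = u \<bullet> e"
  have zu: "z \<bullet> u = P - q" by (simp add: P_def q_def inner_add_right inner_commute)
  have eu: "e \<bullet> u = q" by (simp add: q_def inner_commute)
  have "2 * (z \<bullet> (- (k * P) *\<^sub>R u)) + 2 * (e \<bullet> (- d *\<^sub>R e + (k * P) *\<^sub>R u))
      = - 2 * k * P * (z \<bullet> u) - 2 * d * (e \<bullet> e) + 2 * k * P * (e \<bullet> u)"
    by (simp add: inner_add_right algebra_simps)
  also have "\<dots> = - 2 * k * P^2 + k * (4 * P * q) - 2 * d * (e \<bullet> e)"
    unfolding zu eu by (simp add: power2_eq_square algebra_simps)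
  finally have "2 * (z \<bullet> (- (k * P) *\<^sub>R u)) + 2 * (e \<bullet> (- d *\<^sub>R e + (k * P) *\<^sub>R u))
      = - 2 * k * P^2 + k * (4 * P * q) - 2 * d * (e \<bullet> e)" .
  moreover have "4 * P * q \<le> 3/2 * P^2 + 8/3 * ((u \<bullet> u) * (e \<bullet> e))"
  proof -
    have "0 \<le> 3/2 * (P - 4/3 * q)^2" by simp
    moreover have "q^2 \<le> (u \<bullet> u) * (e \<bullet> e)" unfolding q_def by (rule Cauchy_Schwarz_ineq)
    ultimately show ?thesis by (simp add: power2_eq_square algebra_simps)
  qed
  then have "k * (4 * P * q) \<le> k * (3/2 * P^2 + 8/3 * ((u \<bullet> u) * (e \<bullet> e)))"
    using k by (rule mult_left_mono)
  ultimately show ?thesis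
    unfolding P_def[symmetric] by (simp add: algebra_simps)
qed

lemma adaptive_law_drift:
  fixes u :: "'a::real_normed_vector"
  assumes "0 \<le> k" "k \<le> \<gamma>" "norm u \<le> M"
  shows "norm (- (k * P) *\<^sub>R u) \<le> \<gamma> * M * \<bar>P\<bar>"
proof -
  have "norm (- (k * P) *\<^sub>R u) = k * (\<bar>P\<bar> * norm u)" using assms(1) by (simp add: abs_mult)
  also have "\<dots> \<le> \<gamma> * (\<bar>P\<bar> * M)" using assms by (intro mult_mono mult_left_mono) auto
  finally show ?thesis by (simp add: algebra_simps)
qed

lemma adaptive_law_growth:
  fixes u e :: "'a::real_inner"
  assumes k: "0 \<le> k" "k \<le> \<gamma>" and d: "d \<le> K" and u: "norm u \<le> M"
  shows "- (2 * K + \<gamma> * M^2) * (e \<bullet> e) - \<gamma> * P^2 \<le> 2 * (e \<bullet> (- d *\<^sub>R e + (k * P) *\<^sub>R u))"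
proof -
  define q where "q = u \<bullet> e"
  have q: "q^2 \<le> M^2 * (e \<bullet> e)" unfolding q_def by (rule inner_sq_le_of_norm_le[OF u])
  have "- (P^2 + q^2) \<le> 2 * P * q"
    using zero_le_power2[of "P + q"] by (simp add: power2_eq_square algebra_simps)
  from mult_left_mono[OF this k(1)] have "- (k * P^2) - k * q^2 \<le> k * (2 * P * q)"
    by (simp add: algebra_simps)
  moreover have "k * P^2 \<le> \<gamma> * P^2" "k * q^2 \<le> \<gamma> * (M^2 * (e \<bullet> e))"
    using k q by (auto intro: mult_mono)
  moreover have "d * (e \<bullet> e) \<le> K * (e \<bullet> e)" using d by (simp add: mult_right_mono)
  moreover have "2 * (e \<bullet> (- d *\<^sub>R e + (k * P) *\<^sub>R u)) = - 2 * d * (e \<bullet> e) + k * (2 * P * q)"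
    by (simp add: q_def inner_add_right inner_commute[of e u] algebra_simps)
  moreover have "- (2 * K + \<gamma> * M^2) * (e \<bullet> e) = - 2 * (K * (e \<bullet> e)) - \<gamma> * (M^2 * (e \<bullet> e))"
    by (simp add: algebra_simps)
  ultimately show ?thesis by linarith
qed

lemma pe_system_adaptive_law:
  fixes \<phi> :: "real \<Rightarrow> 'a::euclidean_space" and F :: "real \<Rightarrow> 'a \<times> 'a \<Rightarrow> 'a \<times> 'a"
    and k d :: "real \<Rightarrow> real"
  assumes pos: "M > 0" "T > 0" "\<delta> > 0" "a > 0" "b > 0" "\<gamma> > 0" "K \<ge> 0"
    and pc: "piecewise_continuous_nonneg \<phi>"
    and bounded: "\<And>t. 0 \<le> t \<Longrightarrow> norm (\<phi> t) \<le> M"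
    and excitation: "\<And>t v. 0 \<le> t \<Longrightarrow> \<delta> * (v \<bullet> v) \<le> integral {t..t+T} (\<lambda>s. (\<phi> s \<bullet> v)^2)"
    and continuous_along: "\<And>x s. isCont \<phi> s \<Longrightarrow> isCont x s \<Longrightarrow> isCont (\<lambda>t. F t (x t)) s"
    and adaptation: "\<And>s y. snd (F s y) = - (k s * (\<phi> s \<bullet> (fst y - \<theta>s))) *\<^sub>R \<phi> s"
    and error: "\<And>s y. fst (F s y) - snd (F s y)
                  = - d s *\<^sub>R (fst y - snd y) + (k s * (\<phi> s \<bullet> (fst y - \<theta>s))) *\<^sub>R \<phi> s"
    and gains: "\<And>s. 0 \<le> s \<Longrightarrow> 0 \<le> k s \<and> k s \<le> \<gamma> \<and> d s \<le> K \<and> a \<le> k s / 2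
                  \<and> b \<le> 2 * d s - 8/3 * k s * (\<phi> s \<bullet> \<phi> s)"
  shows "pe_system \<phi> F \<theta>s M T \<delta> a b (2 * K + \<gamma> * M^2) \<gamma> (\<gamma> * M)"
proof
  fix s :: real and y :: "'a \<times> 'a" assume s: "0 \<le> s"
  define P where "P = \<phi> s \<bullet> (fst y - \<theta>s)"
  define E where "E = (fst y - snd y) \<bullet> (fst y - snd y)"
  have ze: "(snd y - \<theta>s) + (fst y - snd y) = fst y - \<theta>s" by simp
  have "2 * ((snd y - \<theta>s) \<bullet> snd (F s y)) + 2 * ((fst y - snd y) \<bullet> (fst (F s y) - snd (F s y)))
      \<le> - (k s / 2) * P^2 - (2 * d s - 8/3 * k s * (\<phi> s \<bullet> \<phi> s)) * E"
    using adaptive_law_decrease[of "k s" "snd y - \<theta>s" "\<phi> s" "fst y - snd y" "d s"] gains[OF s]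
    unfolding error unfolding adaptation ze P_def E_def by simp
  also have "\<dots> \<le> - a * P^2 - b * E"
  proof (rule diff_mono)
    have "a * P^2 \<le> (k s / 2) * P^2" using gains[OF s] by (intro mult_right_mono) auto
    then show "- (k s / 2) * P^2 \<le> - a * P^2" by simp
    show "b * E \<le> (2 * d s - 8/3 * k s * (\<phi> s \<bullet> \<phi> s)) * E"
      using gains[OF s] by (simp add: E_def mult_right_mono)
  qed
  finally show "2 * ((snd y - \<theta>s) \<bullet> snd (F s y)) + 2 * ((fst y - snd y) \<bullet> (fst (F s y) - snd (F s y)))
      \<le> - a * (\<phi> s \<bullet> (fst y - \<theta>s))^2 - b * ((fst y - snd y) \<bullet> (fst y - snd y))"
    unfolding P_def E_def .
  show "norm (snd (F s y)) \<le> \<gamma> * M * \<bar>\<phi> s \<bullet> (fst y - \<theta>s)\<bar>"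
    unfolding adaptation using gains[OF s] bounded[OF s] by (intro adaptive_law_drift) auto
  show "- (2 * K + \<gamma> * M^2) * ((fst y - snd y) \<bullet> (fst y - snd y)) - \<gamma> * (\<phi> s \<bullet> (fst y - \<theta>s))^2
      \<le> 2 * ((fst y - snd y) \<bullet> (fst (F s y) - snd (F s y)))"
    unfolding error using gains[OF s] bounded[OF s] by (intro adaptive_law_growth) auto
qed (use pos pc bounded excitation continuous_along in auto)

lemma pe_system_sys1:
  fixes \<phi> :: "real \<Rightarrow> real ^ 'n" and \<theta>s :: "real ^ 'n"
  assumes pc: "piecewise_continuous_nonneg \<phi>"
    and M: "M > 0" and bound: "\<forall>t\<ge>0. norm (\<phi> t) \<le> M"
    and T: "T > 0" and \<delta>: "\<delta> > 0"
    and excitation: "\<And>t v. 0 \<le> t \<Longrightarrow> \<delta> * (v \<bullet> v) \<le> integral {t..t+T} (\<lambda>s. (\<phi> s \<bullet> v)^2)"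
    and \<beta>: "\<beta> > 0" and \<gamma>: "\<gamma> > 0" and \<mu>: "\<mu> > 0"
    and gain: "\<beta> \<ge> 2 * \<gamma> / \<mu>"
  shows "pe_system \<phi> (sys1 \<beta> \<gamma> \<mu> \<phi> \<theta>s) \<theta>s M T \<delta> (\<gamma> / 2) (2 * \<beta>)
      (2 * (\<beta> * (1 + \<mu> * M^2)) + \<gamma> * M^2) \<gamma> (\<gamma> * M)"
proof (rule pe_system_adaptive_law[where k = "\<lambda>_. \<gamma>" and d = "\<lambda>s. \<beta> * (1 + \<mu> * (\<phi> s \<bullet> \<phi> s))"])
  have "2 * \<gamma> \<le> \<beta> * \<mu>" using gain \<mu> by (simp add: pos_divide_le_eq)
  fix s :: real assume s: "0 \<le> s"
  have r: "0 \<le> \<phi> s \<bullet> \<phi> s" "\<phi> s \<bullet> \<phi> s \<le> M^2"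
    using bound s inner_self_le_of_norm_le by auto
  have "8/3 * \<gamma> * (\<phi> s \<bullet> \<phi> s) \<le> 2 * (\<beta> * \<mu>) * (\<phi> s \<bullet> \<phi> s)"
    using \<open>2 * \<gamma> \<le> \<beta> * \<mu>\<close> \<gamma> r(1) by (intro mult_right_mono) auto
  moreover have "\<beta> * (1 + \<mu> * (\<phi> s \<bullet> \<phi> s)) \<le> \<beta> * (1 + \<mu> * M^2)"
    using r \<beta> \<mu> by (intro mult_left_mono) auto
  ultimately show "0 \<le> \<gamma> \<and> \<gamma> \<le> \<gamma> \<and> \<beta> * (1 + \<mu> * (\<phi> s \<bullet> \<phi> s)) \<le> \<beta> * (1 + \<mu> * M^2) \<and> \<gamma> / 2 \<le> \<gamma> / 2
      \<and> 2 * \<beta> \<le> 2 * (\<beta> * (1 + \<mu> * (\<phi> s \<bullet> \<phi> s))) - 8/3 * \<gamma> * (\<phi> s \<bullet> \<phi> s)"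
    using \<gamma> by (simp add: algebra_simps)
next
  fix x :: "real \<Rightarrow> (real ^ 'n) \<times> (real ^ 'n)" and s assume "isCont \<phi> s" "isCont x s"
  then show "isCont (\<lambda>t. sys1 \<beta> \<gamma> \<mu> \<phi> \<theta>s t (x t)) s"
    unfolding sys1_def Nt_def outer_mult_vec by (intro continuous_intros)
qed (use pc M bound T \<delta> excitation \<beta> \<gamma> \<mu> in \<open>auto simp: sys1_def Nt_def outer_mult_vec\<close>)

lemma pe_system_sys2:
  fixes \<phi> :: "real \<Rightarrow> real ^ 'n" and \<theta>s :: "real ^ 'n"
  assumes pc: "piecewise_continuous_nonneg \<phi>"
    and M: "M > 0" and bound: "\<forall>t\<ge>0. norm (\<phi> t) \<le> M"
    and T: "T > 0" and \<delta>: "\<delta> > 0"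
    and excitation: "\<And>t v. 0 \<le> t \<Longrightarrow> \<delta> * (v \<bullet> v) \<le> integral {t..t+T} (\<lambda>s. (\<phi> s \<bullet> v)^2)"
    and \<beta>: "\<beta> > 0" and \<gamma>: "\<gamma> > 0" and \<mu>: "\<mu> > 0"
    and gain: "\<beta> \<ge> 2 * \<gamma> / \<mu>"
  shows "pe_system \<phi> (sys2 \<beta> \<gamma> \<mu> \<phi> \<theta>s) \<theta>s M T \<delta> (\<gamma> / (2 * (1 + \<mu> * M^2))) (2 * \<beta> / 3)
      (2 * \<beta> + \<gamma> * M^2) \<gamma> (\<gamma> * M)"
proof (rule pe_system_adaptive_law[where k = "\<lambda>s. \<gamma> / Nt \<mu> \<phi> s" and d = "\<lambda>_. \<beta>"])
  have "2 * \<gamma> \<le> \<beta> * \<mu>" using gain \<mu> by (simp add: pos_divide_le_eq)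
  fix s :: real assume s: "0 \<le> s"
  define r where "r = \<phi> s \<bullet> \<phi> s"
  have r: "0 \<le> r" "r \<le> M^2"
    using bound s inner_self_le_of_norm_le unfolding r_def by auto
  have N: "Nt \<mu> \<phi> s = 1 + \<mu> * r" "1 \<le> 1 + \<mu> * r" "1 + \<mu> * r \<le> 1 + \<mu> * M^2"
    using r \<mu> by (auto simp: Nt_def r_def)
  \<comment> \<open>the normalisation keeps the effective adaptation gain \<open>\<gamma> r / N\<close> below \<open>\<beta> / 2\<close>\<close>
  have "2 * \<gamma> * r \<le> \<beta> * (1 + \<mu> * r)"
    using mult_right_mono[OF \<open>2 * \<gamma> \<le> \<beta> * \<mu>\<close> r(1)] \<beta> by (simp add: algebra_simps)
  then have "8/3 * (\<gamma> / (1 + \<mu> * r)) * r \<le> 4/3 * \<beta>"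
    using N(2) by (simp add: field_simps)
  moreover have "\<gamma> / (2 * (1 + \<mu> * M^2)) \<le> \<gamma> / (1 + \<mu> * r) / 2"
    using N \<gamma> by (simp add: frac_le)
  moreover have "0 \<le> \<gamma> / (1 + \<mu> * r)" "\<gamma> / (1 + \<mu> * r) \<le> \<gamma>"
    using N(2) \<gamma> by (simp_all add: divide_le_eq)
  ultimately show "0 \<le> \<gamma> / Nt \<mu> \<phi> s \<and> \<gamma> / Nt \<mu> \<phi> s \<le> \<gamma> \<and> \<beta> \<le> \<beta>
      \<and> \<gamma> / (2 * (1 + \<mu> * M^2)) \<le> \<gamma> / Nt \<mu> \<phi> s / 2
      \<and> 2 * \<beta> / 3 \<le> 2 * \<beta> - 8/3 * (\<gamma> / Nt \<mu> \<phi> s) * (\<phi> s \<bullet> \<phi> s)"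
    unfolding N(1) r_def[symmetric] by linarith
next
  fix x :: "real \<Rightarrow> (real ^ 'n) \<times> (real ^ 'n)" and s assume "isCont \<phi> s" "isCont x s"
  moreover have "Nt \<mu> \<phi> s \<noteq> 0" for s
  proof -
    have "0 \<le> \<mu> * (\<phi> s \<bullet> \<phi> s)" using \<mu> by simp
    then show ?thesis by (simp add: Nt_def)
  qed
  ultimately show "isCont (\<lambda>t. sys2 \<beta> \<gamma> \<mu> \<phi> \<theta>s t (x t)) s"
    unfolding sys2_def outer_mult_vec by (intro continuous_intros) (auto simp: Nt_def)
qed (use pc M bound T \<delta> excitation \<beta> \<gamma> \<mu> in \<open>auto simp: sys2_def outer_mult_vec add_pos_nonneg\<close>)

theorem mainTheorem3:
  fixes \<phi> :: "real \<Rightarrow> real ^ 'n" and \<theta>s :: "real ^ 'n"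
    and \<beta> \<gamma> \<mu> M T \<delta> :: real
  assumes pc: "piecewise_continuous_nonneg \<phi>"
    and M: "M > 0" and bound: "\<forall>t\<ge>0. norm (\<phi> t) \<le> M"
    and T: "T > 0" and \<delta>: "\<delta> > 0"
    and PE: "\<forall>t\<ge>0. mat_ge (integral {t..t+T} (\<lambda>s. outer (\<phi> s) (\<phi> s))) (\<delta> *\<^sub>R mat 1)"
    and \<beta>: "\<beta> > 0" and \<gamma>: "\<gamma> > 0" and \<mu>: "\<mu> > 0"
    and gain: "\<beta> \<ge> 2 * \<gamma> / \<mu>"
  shows "UGES (sys1 \<beta> \<gamma> \<mu> \<phi> \<theta>s) (\<theta>s, \<theta>s) \<and> UGES (sys2 \<beta> \<gamma> \<mu> \<phi> \<theta>s) (\<theta>s, \<theta>s)"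
proof -
  have excitation: "\<And>t v. 0 \<le> t \<Longrightarrow> \<delta> * (v \<bullet> v) \<le> integral {t..t+T} (\<lambda>s. (\<phi> s \<bullet> v)^2)"
    using PE mat_ge_integral_outer_imp_quadratic[OF \<delta>] by blast
  show ?thesis
    using pe_system.UGES[OF pe_system_sys1[OF pc M bound T \<delta> excitation \<beta> \<gamma> \<mu> gain]]
      pe_system.UGES[OF pe_system_sys2[OF pc M bound T \<delta> excitation \<beta> \<gamma> \<mu> gain]]
    by blast
qed

end
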